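(* If $A\subseteq\mathbb N_0\times\mathbb S$ is a Schnorr test for a computable forecasting system $\varphi$, then $n\mapsto\overline P_\varphi([A_n])$ is a computable sequence of real numbers.
   Context: $\mathbb N_0=\{0,1,\dots\}$; $\Omega=\{0,1\}^{\mathbb N}$; $\mathbb S$ finite binary strings, $|s|$ length, $\omega^n$ first $n$ entries of $\omega$; $[s]=\{\omega:\omega^{|s|}=s\}$, $[A]=\bigcup_{s\in A}[s]$. For $A\subseteq\mathbb N_0\times\mathbb S$: $A_n=\{s:(n,s)\in A\}$, $A_n^{<\ell}=\{s\in A_n:|s|<\ell\}$. $\mathcal I$: nonempty closed subintervals of $[0,1]$; $\overline E_I(f)=\max_{p\in I}[pf(1)+(1-p)f(0)]$. Forecasting system $\varphi:\mathbb S\to\mathcal I$, $\underline\varphi=\min\varphi$, $\overline\varphi=\max\varphi$. Supermartingale: $M:\mathbb S\to\mathbb R$ with $\overline E_{\varphi(s)}(M(s\,\cdot))\le M(s)$ for all $s$. $\overline P_\varphi(G)=\inf\{M(\square):M\text{ supermartingale for }\varphi,\ \liminf_nM(\omega^n)\ge\mathbb 1_G(\omega)\ \forall\omega\}$. A real map $r$ on an encoded countable set is computable if there is a recursive rational $q$ with $|r(d)-q(d,N)|\le2^{-N}$; $\varphi$ is computable if $\underline\varphi,\overline\varphi$ are computable. A Schnorr test for $\varphi$ is a recursive $A\subseteq\mathbb N_0\times\mathbb S$ with $\overline P_\varphi([A_n])\le2^{-n}$ for all $n$, and a recursive $e:\mathbb N_0^2\to\mathbb N_0$ with $\overline P_\varphi([A_n]\setminus[A_n^{<\ell}])\le2^{-N}$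 for all $(N,n)$ and $\ell\ge e(N,n)$. *)

theory Defs
  imports "HOL-Analysis.Analysis" "HOL-Library.Nat_Bijection"
begin

text \<open>Finite binary strings are \<open>bool list\<close> (True = 1, False = 0);
  infinite outcome sequences are \<open>nat \<Rightarrow> bool\<close> (index 0 is the first entry).\<close>

definition prefix_of :: "(nat \<Rightarrow> bool) \<Rightarrow> nat \<Rightarrow> bool list" where
  "prefix_of \<omega> n = map \<omega> [0..<n]"

definition cyl :: "bool list \<Rightarrow> (nat \<Rightarrow> bool) set" where
  "cyl s = {\<omega>. prefix_of \<omega> (length s) = s}"

definition cyl_set :: "bool list set \<Rightarrow> (nat \<Rightarrow> bool) set" where
  "cyl_set S = (\<Union>s\<in>S. cyl s)"

definition section_of :: "(nat \<times> bool list) set \<Rightarrow> nat \<Rightarrow> bool list set" where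
  "section_of A n = {s. (n, s) \<in> A}"

definition section_lt :: "(nat \<times> bool list) set \<Rightarrow> nat \<Rightarrow> nat \<Rightarrow> bool list set" where
  "section_lt A n l = {s \<in> section_of A n. length s < l}"

definition forecasting_system :: "(bool list \<Rightarrow> real set) \<Rightarrow> bool" where
  "forecasting_system \<phi> \<longleftrightarrow> (\<forall>s. \<exists>a b. 0 \<le> a \<and> a \<le> b \<and> b \<le> 1 \<and> \<phi> s = {a..b})"

definition lower_fs :: "(bool list \<Rightarrow> real set) \<Rightarrow> bool list \<Rightarrow> real" where
  "lower_fs \<phi> s = Inf (\<phi> s)"

definition upper_fs :: "(bool list \<Rightarrow> real set) \<Rightarrow> bool list \<Rightarrow> real" where
  "upper_fs \<phi> s = Sup (\<phi> s)"

definition upper_exp :: "real set \<Rightarrow> (bool \<Rightarrow> real) \<Rightarrow> real" where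
  "upper_exp I f = Sup ((\<lambda>p. p * f True + (1 - p) * f False) ` I)"

definition supermartingale :: "(bool list \<Rightarrow> real set) \<Rightarrow> (bool list \<Rightarrow> real) \<Rightarrow> bool" where
  "supermartingale \<phi> M \<longleftrightarrow> (\<forall>s. upper_exp (\<phi> s) (\<lambda>x. M (s @ [x])) \<le> M s)"

definition upper_prob :: "(bool list \<Rightarrow> real set) \<Rightarrow> (nat \<Rightarrow> bool) set \<Rightarrow> real" where
  "upper_prob \<phi> G = Inf {M [] | M. supermartingale \<phi> M \<and>
      (\<forall>\<omega>. liminf (\<lambda>n. ereal (M (prefix_of \<omega> n))) \<ge> ereal (indicator G \<omega>))}"

datatype recf = Zero | Succ | Proj nat | Comp recf "recf list" | Prim recf recf | Mn recf

inductive rec_eval :: "recf \<Rightarrow> nat list \<Rightarrow> nat \<Rightarrow> bool" where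
  zero: "rec_eval Zero xs 0"
| succ: "rec_eval Succ (x # xs) (Suc x)"
| proj: "i < length xs \<Longrightarrow> rec_eval (Proj i) xs (xs ! i)"
| comp: "list_all2 (\<lambda>g y. rec_eval g xs y) gs ys \<Longrightarrow> rec_eval f ys z \<Longrightarrow> rec_eval (Comp f gs) xs z"
| prim0: "rec_eval f xs y \<Longrightarrow> rec_eval (Prim f g) (0 # xs) y"
| primS: "rec_eval (Prim f g) (n # xs) y \<Longrightarrow> rec_eval g (y # n # xs) z
          \<Longrightarrow> rec_eval (Prim f g) (Suc n # xs) z"
| mn: "rec_eval f (n # xs) 0 \<Longrightarrow> (\<forall>m<n. \<exists>y. rec_eval f (m # xs) (Suc y))
          \<Longrightarrow> rec_eval (Mn f) xs n"

text \<open>A total function \<open>nat \<Rightarrow> nat\<close> is recursive if some mu-recursive code computes it.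
  Several arguments are encoded with the Cantor pairing \<open>prod_encode\<close>.\<close>
definition recursive1 :: "(nat \<Rightarrow> nat) \<Rightarrow> bool" where
  "recursive1 f \<longleftrightarrow> (\<exists>c. \<forall>x. rec_eval c [x] (f x))"

definition enc_str :: "bool list \<Rightarrow> nat" where
  "enc_str s = list_encode (map of_bool s)"

definition recursive_set :: "(nat \<times> bool list) set \<Rightarrow> bool" where
  "recursive_set A \<longleftrightarrow> (\<exists>f. recursive1 f \<and>
     (\<forall>n s. f (prod_encode (n, enc_str s)) = (if (n, s) \<in> A then 1 else 0)))"

definition recursive2 :: "(nat \<Rightarrow> nat \<Rightarrow> nat) \<Rightarrow> bool" where
  "recursive2 e \<longleftrightarrow> (\<exists>f. recursive1 f \<and> (\<forall>x y. e x y = f (prod_encode (x, y))))"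

definition recursive_rat :: "(nat \<Rightarrow> rat) \<Rightarrow> bool" where
  "recursive_rat q \<longleftrightarrow> (\<exists>a b c. recursive1 a \<and> recursive1 b \<and> recursive1 c \<and>
     (\<forall>x. q x = (of_nat (a x) - of_nat (b x)) / of_nat (c x + 1)))"

definition computable_real :: "('d \<Rightarrow> nat) \<Rightarrow> ('d \<Rightarrow> real) \<Rightarrow> bool" where
  "computable_real enc r \<longleftrightarrow> (\<exists>q. recursive_rat q \<and>
     (\<forall>d N. \<bar>r d - real_of_rat (q (prod_encode (enc d, N)))\<bar> \<le> (1/2) ^ N))"

definition computable_fs :: "(bool list \<Rightarrow> real set) \<Rightarrow> bool" where
  "computable_fs \<phi> \<longleftrightarrow> computable_real enc_str (lower_fs \<phi>) \<and> computable_real enc_str (upper_fs \<phi>)"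

definition schnorr_test :: "(bool list \<Rightarrow> real set) \<Rightarrow> (nat \<times> bool list) set \<Rightarrow> bool" where
  "schnorr_test \<phi> A \<longleftrightarrow> recursive_set A \<and>
     (\<forall>n. upper_prob \<phi> (cyl_set (section_of A n)) \<le> (1/2) ^ n) \<and>
     (\<exists>e. recursive2 e \<and> (\<forall>N n l. l \<ge> e N n \<longrightarrow>
        upper_prob \<phi> (cyl_set (section_of A n) - cyl_set (section_lt A n l)) \<le> (1/2) ^ N))"

end

theory Submission
  imports Defs
begin

text \<open>The upper probability of the cylinder spanned by the strings of length \<open>< l\<close> in a level \<open>A\<^sub>n\<close>
  is the value of a finite game, computed by backward induction over the binary tree of depth \<open>l\<close>
  with the upper expectation over the forecast interval at each node. Using rational approximations
  of precision \<open>2^-K\<close> to the computable forecasts perturbs this value by at most \<open>l 2^-K\<close>. The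
  recursive modulus \<open>e\<close> of the Schnorr test tells how large \<open>l\<close> must be for the discarded part of
  \<open>A\<^sub>n\<close> to have upper probability at most \<open>2^-(N+1)\<close>, so subadditivity of upper probability yields
  a \<open>2^-N\<close>-approximation. The backward induction is run by a stack machine with a primitive
  recursive step function, which makes the approximation recursive in \<open>(n, N)\<close>.\<close>

section \<open>Closure properties of recursive functions\<close>

abbreviation pair :: "nat \<Rightarrow> nat \<Rightarrow> nat" where
  "pair a b \<equiv> prod_encode (a, b)"

definition unpair1 :: "nat \<Rightarrow> nat" where
  "unpair1 z = fst (prod_decode z)"

definition unpair2 :: "nat \<Rightarrow> nat" where
  "unpair2 z = snd (prod_decode z)"

lemma unpair_pair [simp]: "unpair1 (pair a b) = a" "unpair2 (pair a b) = b"
  by (simp_all add: unpair1_def unpair2_def)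

lemma rec_eval_Proj_eq [intro]: "i < length xs \<Longrightarrow> y = xs ! i \<Longrightarrow> rec_eval (Proj i) xs y"
  using rec_eval.proj by blast

lemma rec_eval_Succ_eq [intro]: "y = Suc x \<Longrightarrow> rec_eval Succ (x # xs) y"
  using rec_eval.succ by blast

lemma rec_eval_Comp1 [intro]: "rec_eval g xs y \<Longrightarrow> rec_eval f [y] z \<Longrightarrow> rec_eval (Comp f [g]) xs z"
  by (rule rec_eval.comp[where ys="[y]"]) auto

lemma rec_eval_Comp2 [intro]:
  "rec_eval g xs y \<Longrightarrow> rec_eval h xs u \<Longrightarrow> rec_eval f [y, u] z \<Longrightarrow> rec_eval (Comp f [g, h]) xs z"
  by (rule rec_eval.comp[where ys="[y, u]"]) auto

definition add_code :: recf where
  "add_code = Prim (Proj 0) (Comp Succ [Proj 0])"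

lemma rec_eval_add_code [intro]: "y = n + m \<Longrightarrow> rec_eval add_code [n, m] y"
proof (induction n arbitrary: y)
  case 0 thus ?case unfolding add_code_def by (auto intro!: rec_eval.intros)
next
  case (Suc n)
  show ?case unfolding add_code_def Suc.prems
    by (rule rec_eval.primS[OF Suc.IH[OF refl, unfolded add_code_def]]) (auto intro!: rec_eval.intros)
qed

definition mult_code :: recf where
  "mult_code = Prim Zero (Comp add_code [Proj 0, Proj 2])"

lemma rec_eval_mult_code: "rec_eval mult_code [n, m] (n * m)"
proof (induction n)
  case 0 thus ?case unfolding mult_code_def by (auto intro!: rec_eval.intros)
next
  case (Suc n)
  have "rec_eval (Comp add_code [Proj 0, Proj 2]) [n * m, n, m] (n * m + m)"
    by (rule rec_eval.comp[where ys="[n * m, m]"]) auto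
  thus ?case unfolding mult_code_def
    by (intro rec_eval.primS[OF Suc[unfolded mult_code_def]]) (simp add: add.commute)
qed

definition pred_code :: recf where
  "pred_code = Prim Zero (Proj 1)"

lemma rec_eval_pred_code [intro]: "y = n - 1 \<Longrightarrow> rec_eval pred_code [n] y"
proof (induction n arbitrary: y)
  case 0 thus ?case unfolding pred_code_def by (auto intro!: rec_eval.intros)
next
  case (Suc n)
  show ?case unfolding pred_code_def Suc.prems
    by (rule rec_eval.primS[OF Suc.IH[OF refl, unfolded pred_code_def]]) auto
qed

definition diff_code :: recf where
  "diff_code = Prim (Proj 0) (Comp pred_code [Proj 0])"

text \<open>Note the argument order: \<open>diff_code\<close> maps \<open>[n, m]\<close> to \<open>m - n\<close>.\<close>

lemma rec_eval_diff_code [intro]: "y = m - n \<Longrightarrow> rec_eval diff_code [n, m] y"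
proof (induction n arbitrary: y)
  case 0 thus ?case unfolding diff_code_def by (auto intro!: rec_eval.intros)
next
  case (Suc n)
  have "rec_eval (Comp pred_code [Proj 0]) [m - n, n, m] (m - n - 1)"
    by (rule rec_eval.comp[where ys="[m - n]"]) auto
  thus ?case unfolding diff_code_def Suc.prems
    by (intro rec_eval.primS[OF Suc.IH[OF refl, unfolded diff_code_def]]) simp
qed

definition if_code :: recf where
  "if_code = Prim (Proj 0) (Proj 3)"

lemma rec_eval_if_code: "rec_eval if_code [c, a, b] (if c = 0 then a else b)"
proof (induction c)
  case 0 thus ?case unfolding if_code_def by (auto intro!: rec_eval.intros)
next
  case (Suc c)
  show ?case unfolding if_code_def
    by (rule rec_eval.primS[OF Suc[unfolded if_code_def]]) auto
qed

definition triangle_code :: recf where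
  "triangle_code = Prim Zero (Comp add_code [Proj 0, Comp Succ [Proj 1]])"

lemma rec_eval_triangle_code [intro]: "y = triangle n \<Longrightarrow> rec_eval triangle_code [n] y"
proof (induction n arbitrary: y)
  case 0 thus ?case unfolding triangle_code_def by (auto intro!: rec_eval.intros)
next
  case (Suc n)
  have "rec_eval (Comp add_code [Proj 0, Comp Succ [Proj 1]]) [triangle n, n] (triangle n + Suc n)"
    by (rule rec_eval.comp[where ys="[triangle n, Suc n]"])
       (auto intro!: rec_eval.intros rec_eval.comp[where ys="[n]"])
  thus ?case unfolding triangle_code_def Suc.prems
    by (intro rec_eval.primS[OF Suc.IH[OF refl, unfolded triangle_code_def]]) simp
qed

lemma recursive1_const [intro]: "recursive1 (\<lambda>x. k)"
proof -
  have "\<exists>c. \<forall>xs. rec_eval c xs k"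
  proof (induction k)
    case 0 thus ?case by (auto intro: rec_eval.intros)
  next
    case (Suc k)
    then obtain c where "\<And>xs. rec_eval c xs k" by blast
    hence "rec_eval (Comp Succ [c]) xs (Suc k)" for xs by blast
    thus ?case by blast
  qed
  thus ?thesis unfolding recursive1_def by blast
qed

lemma recursive1_id [intro]: "recursive1 (\<lambda>x. x)"
  unfolding recursive1_def by (rule exI[of _ "Proj 0"]) auto

lemma recursive1_comp: "recursive1 f \<Longrightarrow> recursive1 g \<Longrightarrow> recursive1 (\<lambda>x. f (g x))"
  unfolding recursive1_def by blast

lemma recursive1_binop:
  assumes op: "\<And>a b. rec_eval c [a, b] (h a b)" and "recursive1 F" "recursive1 G"
  shows "recursive1 (\<lambda>x. h (F x) (G x))"
proof -
  from assms(2,3) obtain cF cG where "\<forall>x. rec_eval cF [x] (F x)" "\<forall>x. rec_eval cG [x] (G x)"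
    unfolding recursive1_def by blast
  hence "rec_eval (Comp c [cF, cG]) [x] (h (F x) (G x))" for x using op by blast
  thus ?thesis unfolding recursive1_def by blast
qed

lemma recursive1_add [intro]: "recursive1 F \<Longrightarrow> recursive1 G \<Longrightarrow> recursive1 (\<lambda>x. F x + G x)"
  by (rule recursive1_binop) auto

lemma recursive1_mult [intro]: "recursive1 F \<Longrightarrow> recursive1 G \<Longrightarrow> recursive1 (\<lambda>x. F x * G x)"
  by (rule recursive1_binop[OF rec_eval_mult_code])

lemma recursive1_diff [intro]: "recursive1 F \<Longrightarrow> recursive1 G \<Longrightarrow> recursive1 (\<lambda>x. F x - G x)"
  using recursive1_binop[of diff_code "\<lambda>a b. b - a" G F] by auto

lemma recursive1_Suc [intro]: "recursive1 F \<Longrightarrow> recursive1 (\<lambda>x. Suc (F x))"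
  using recursive1_add[of F "\<lambda>_. 1"] by auto

lemma recursive1_If [intro]:
  assumes "recursive1 C" "recursive1 F" "recursive1 G"
  shows "recursive1 (\<lambda>x. if C x = 0 then F x else G x)"
proof -
  from assms obtain cC cF cG where codes:
    "\<forall>x. rec_eval cC [x] (C x)" "\<forall>x. rec_eval cF [x] (F x)" "\<forall>x. rec_eval cG [x] (G x)"
    unfolding recursive1_def by blast
  have "rec_eval (Comp if_code [cC, cF, cG]) [x] (if C x = 0 then F x else G x)" for x
    by (rule rec_eval.comp[where ys="[C x, F x, G x]"]) (simp add: codes, rule rec_eval_if_code)
  thus ?thesis unfolding recursive1_def by blast
qed

lemma recursive1_pair [intro]: "recursive1 F \<Longrightarrow> recursive1 G \<Longrightarrow> recursive1 (\<lambda>x. pair (F x) (G x))"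
proof -
  have "recursive1 triangle" unfolding recursive1_def by blast
  thus "recursive1 F \<Longrightarrow> recursive1 G \<Longrightarrow> recursive1 (\<lambda>x. pair (F x) (G x))"
    unfolding prod_encode_def by (auto intro!: recursive1_comp[of triangle "\<lambda>x. F x + G x", simplified])
qed

definition triangle_root :: "nat \<Rightarrow> nat" where
  "triangle_root x = (LEAST k. x < triangle (Suc k))"

lemma triangle_root:
  "x < triangle (Suc (triangle_root x))" "m < triangle_root x \<Longrightarrow> triangle (Suc m) \<le> x"
proof -
  have "x < triangle (Suc x)" by (induction x) auto
  thus "x < triangle (Suc (triangle_root x))" unfolding triangle_root_def by (rule LeastI)
  show "m < triangle_root x \<Longrightarrow> triangle (Suc m) \<le> x"
    unfolding triangle_root_def using not_less_Least by fastforce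
qed

lemma triangle_triangle_root_le: "triangle (triangle_root x) \<le> x"
proof (cases "triangle_root x")
  case (Suc m) thus ?thesis using triangle_root(2)[of m x] by simp
qed simp

lemma prod_decode_triangle_root:
  "prod_decode x = (x - triangle (triangle_root x), triangle_root x - (x - triangle (triangle_root x)))"
proof -
  have "x - triangle (triangle_root x) \<le> triangle_root x" using triangle_root(1)[of x] by simp
  hence "prod_encode (x - triangle (triangle_root x), triangle_root x - (x - triangle (triangle_root x))) = x"
    unfolding prod_encode_def using triangle_triangle_root_le[of x] by simp
  thus ?thesis by (metis prod_encode_inverse)
qed

text \<open>The root is found by unbounded search for the least \<open>k\<close> with \<open>Suc x - triangle (Suc k) = 0\<close>.\<close>

definition triangle_root_code :: recf where
  "triangle_root_code = Mn (Comp diff_code [Comp triangle_code [Comp Succ [Proj 0]], Comp Succ [Proj 1]])"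

lemma rec_eval_triangle_root_code: "rec_eval triangle_root_code [x] (triangle_root x)"
proof -
  let ?test = "Comp diff_code [Comp triangle_code [Comp Succ [Proj 0]], Comp Succ [Proj 1]]"
  have succ: "rec_eval (Comp Succ [Proj i]) xs (Suc (xs ! i))" if "i < length xs" for i xs
    using that by (intro rec_eval_Comp1) auto
  have test: "rec_eval ?test [k, x] (Suc x - triangle (Suc k))" for k
    using succ[of 0 "[k, x]"] succ[of 1 "[k, x]"] by (intro rec_eval_Comp2) auto
  show ?thesis unfolding triangle_root_code_def
  proof (rule rec_eval.mn)
    show "rec_eval ?test [triangle_root x, x] 0"
      using test[of "triangle_root x"] triangle_root(1)[of x] by simp
    show "\<forall>m<triangle_root x. \<exists>y. rec_eval ?test [m, x] (Suc y)"
      using test triangle_root(2) by (metis Suc_diff_le)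
  qed
qed

lemma recursive1_unpair [intro]:
  assumes "recursive1 F" shows "recursive1 (\<lambda>x. unpair1 (F x))" "recursive1 (\<lambda>x. unpair2 (F x))"
proof -
  have root: "recursive1 triangle_root" "recursive1 triangle"
    unfolding recursive1_def using rec_eval_triangle_root_code by blast+
  have "recursive1 (\<lambda>x. x - triangle (triangle_root x))"
    by (intro recursive1_diff recursive1_id recursive1_comp[OF root(2) root(1)])
  hence "recursive1 unpair1" unfolding unpair1_def prod_decode_triangle_root by simp
  thus "recursive1 (\<lambda>x. unpair1 (F x))" using assms by (rule recursive1_comp)
  have "recursive1 (\<lambda>x. triangle_root x - (x - triangle (triangle_root x)))"
    by (intro recursive1_diff recursive1_id recursive1_comp[OF root(2) root(1)] root(1))
  hence "recursive1 unpair2" unfolding unpair2_def prod_decode_triangle_root by simp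
  thus "recursive1 (\<lambda>x. unpair2 (F x))" using assms by (rule recursive1_comp)
qed

lemma recursive1_funpow:
  assumes "recursive1 H" "recursive1 N" "recursive1 I"
  shows "recursive1 (\<lambda>x. (H ^^ N x) (I x))"
proof -
  obtain c where c: "\<And>x. rec_eval c [x] (H x)" using assms(1) unfolding recursive1_def by blast
  have "rec_eval (Prim (Proj 0) (Comp c [Proj 0])) [n, v] ((H ^^ n) v)" for n v
  proof (induction n)
    case 0 thus ?case by (auto intro!: rec_eval.prim0)
  next
    case (Suc n)
    show ?case by (rule rec_eval.primS[OF Suc], rule rec_eval_Comp1[where y="(H ^^ n) v"]) (auto intro: c)
  qed
  hence "recursive1 (\<lambda>p. (H ^^ unpair1 p) (unpair2 p))"
    by (intro recursive1_binop[where h="\<lambda>n v. (H ^^ n) v"]) auto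
  from recursive1_comp[OF this recursive1_pair[OF assms(2,3)]] show ?thesis by simp
qed

lemma recursive2_iff: "recursive2 H \<longleftrightarrow> recursive1 (\<lambda>p. H (unpair1 p) (unpair2 p))"
proof
  assume "recursive2 H"
  then obtain f where "recursive1 f" "\<And>x y. H x y = f (pair x y)" unfolding recursive2_def by blast
  thus "recursive1 (\<lambda>p. H (unpair1 p) (unpair2 p))" by (simp add: unpair1_def unpair2_def)
next
  assume "recursive1 (\<lambda>p. H (unpair1 p) (unpair2 p))"
  thus "recursive2 H" unfolding recursive2_def by (intro exI[of _ "\<lambda>p. H (unpair1 p) (unpair2 p)"]) simp
qed

lemma recursive2_comp [intro]:
  assumes "recursive2 H" "recursive1 F" "recursive1 G" shows "recursive1 (\<lambda>x. H (F x) (G x))"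
  using recursive1_comp[OF assms(1)[unfolded recursive2_iff] recursive1_pair[OF assms(2,3)]] by simp

text \<open>The parameter of the step function is carried along in the first component of a pair.\<close>

lemma recursive1_funpow_param:
  assumes "recursive2 H" "recursive1 N" "recursive1 I"
  shows "recursive1 (\<lambda>x. (H x ^^ N x) (I x))"
proof -
  define H' where "H' z = pair (unpair1 z) (H (unpair1 z) (unpair2 z))" for z
  have "recursive1 H'" unfolding H'_def
    by (intro recursive1_pair recursive1_unpair recursive1_id recursive2_comp[OF assms(1)])
  have iter: "(H' ^^ k) (pair x v) = pair x ((H x ^^ k) v)" for k x v
    by (induction k) (auto simp: H'_def)
  have "recursive1 (\<lambda>x. unpair2 ((H' ^^ N x) (pair x (I x))))"
    by (intro recursive1_unpair recursive1_funpow \<open>recursive1 H'\<close> assms recursive1_pair recursive1_id)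
  thus ?thesis by (simp add: iter)
qed

lemma recursive1_power2 [intro]: "recursive1 F \<Longrightarrow> recursive1 (\<lambda>x. 2 ^ F x)"
proof -
  have double: "((\<lambda>z. z + z) ^^ k) 1 = (2::nat) ^ k" for k by (induction k) auto
  assume "recursive1 F"
  hence "recursive1 (\<lambda>x. ((\<lambda>z. z + z) ^^ F x) 1)" by (intro recursive1_funpow) auto
  thus ?thesis unfolding double .
qed

section \<open>Upper expectations over an interval of probabilities\<close>

definition upper_exp_ival :: "real \<Rightarrow> real \<Rightarrow> (bool \<Rightarrow> real) \<Rightarrow> real" where
  "upper_exp_ival a b f = max (a * f True + (1 - a) * f False) (b * f True + (1 - b) * f False)"

lemma upper_exp_atLeastAtMost:
  assumes "a \<le> b" shows "upper_exp {a..b} f = upper_exp_ival a b f"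
proof -
  let ?g = "\<lambda>p. p * f True + (1 - p) * f False"
  have diff: "?g q - ?g p = (q - p) * (f True - f False)" for p q by (simp add: algebra_simps)
  have le: "?g p \<le> upper_exp_ival a b f" if "p \<in> {a..b}" for p
  proof (cases "f False \<le> f True")
    case True
    hence "0 \<le> (b - p) * (f True - f False)" using that by simp
    thus ?thesis using diff[of b p] max.cobounded2[of "?g a" "?g b"] unfolding upper_exp_ival_def by linarith
  next
    case False
    hence "0 \<le> (a - p) * (f True - f False)" using that by (simp add: mult_nonpos_nonpos)
    thus ?thesis using diff[of a p] max.cobounded1[of "?g a" "?g b"] unfolding upper_exp_ival_def by linarith
  qed
  have "upper_exp_ival a b f \<in> ?g ` {a..b}" using assms unfolding upper_exp_ival_def max_def by auto
  thus ?thesis unfolding upper_exp_def by (rule cSup_eq_maximum) (use le in auto)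
qed

lemma forecasting_system_bounds:
  assumes "forecasting_system \<phi>"
  shows "\<phi> s = {lower_fs \<phi> s .. upper_fs \<phi> s}"
    and "0 \<le> lower_fs \<phi> s" "lower_fs \<phi> s \<le> upper_fs \<phi> s" "upper_fs \<phi> s \<le> 1"
proof -
  from assms obtain a b where "0 \<le> a" "a \<le> b" "b \<le> 1" "\<phi> s = {a..b}"
    unfolding forecasting_system_def by blast
  moreover from this have "lower_fs \<phi> s = a" "upper_fs \<phi> s = b"
    unfolding lower_fs_def upper_fs_def by auto
  ultimately show "\<phi> s = {lower_fs \<phi> s .. upper_fs \<phi> s}"
    and "0 \<le> lower_fs \<phi> s" "lower_fs \<phi> s \<le> upper_fs \<phi> s" "upper_fs \<phi> s \<le> 1" by auto
qed

lemma upper_exp_forecast: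
  assumes "forecasting_system \<phi>"
  shows "upper_exp (\<phi> s) f = upper_exp_ival (lower_fs \<phi> s) (upper_fs \<phi> s) f"
  using forecasting_system_bounds[OF assms] upper_exp_atLeastAtMost by metis

lemma supermartingale_iff_upper_exp_ival:
  assumes "forecasting_system \<phi>"
  shows "supermartingale \<phi> M \<longleftrightarrow>
    (\<forall>s. upper_exp_ival (lower_fs \<phi> s) (upper_fs \<phi> s) (\<lambda>x. M (s @ [x])) \<le> M s)"
  unfolding supermartingale_def upper_exp_forecast[OF assms] ..

lemma upper_exp_ival_const [simp]: "upper_exp_ival a b (\<lambda>_. c) = c"
  by (simp add: upper_exp_ival_def algebra_simps)

lemma upper_exp_ival_mono:
  assumes "0 \<le> a" "a \<le> b" "b \<le> 1" "\<And>x. f x \<le> g x"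
  shows "upper_exp_ival a b f \<le> upper_exp_ival a b g"
proof -
  have "p * f True + (1 - p) * f False \<le> p * g True + (1 - p) * g False" if "0 \<le> p" "p \<le> 1" for p
    using that assms(4) by (intro add_mono mult_left_mono) auto
  thus ?thesis unfolding upper_exp_ival_def using assms by (intro max.mono) auto
qed

lemma upper_exp_ival_add_le:
  "upper_exp_ival a b (\<lambda>x. f x + g x) \<le> upper_exp_ival a b f + upper_exp_ival a b g"
  unfolding upper_exp_ival_def by (simp add: algebra_simps max_def)

lemma min_le_upper_exp_ival:
  assumes "0 \<le> a" "a \<le> 1" shows "min (f True) (f False) \<le> upper_exp_ival a b f"
proof -
  have "min (f True) (f False) = a * min (f True) (f False) + (1 - a) * min (f True) (f False)"
    by (simp add: algebra_simps)
  also have "\<dots> \<le> a * f True + (1 - a) * f False"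
    using assms by (intro add_mono mult_left_mono) auto
  finally show ?thesis unfolding upper_exp_ival_def by simp
qed

section \<open>Superhedging and upper probability\<close>

definition superhedges :: "(bool list \<Rightarrow> real set) \<Rightarrow> (bool list \<Rightarrow> real) \<Rightarrow> (nat \<Rightarrow> bool) set \<Rightarrow> bool" where
  "superhedges \<phi> M G \<longleftrightarrow> supermartingale \<phi> M \<and>
     (\<forall>\<omega>. ereal (indicator G \<omega>) \<le> liminf (\<lambda>n. ereal (M (prefix_of \<omega> n))))"

lemma upper_prob_eq_Inf_superhedges: "upper_prob \<phi> G = Inf {M [] | M. superhedges \<phi> M G}"
  unfolding upper_prob_def superhedges_def by simp

lemma liminf_ereal_le_eventually:
  fixes f :: "nat \<Rightarrow> real"
  assumes "\<And>n. m \<le> n \<Longrightarrow> f n \<le> c" shows "liminf (\<lambda>n. ereal (f n)) \<le> ereal c"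
proof -
  have "liminf (\<lambda>n. ereal (f n)) \<le> liminf (\<lambda>n. ereal c)"
    by (rule Liminf_mono) (use assms in \<open>auto simp: eventually_sequentially\<close>)
  thus ?thesis by (simp add: Liminf_const)
qed

lemma liminf_ereal_eventually_const:
  fixes f :: "nat \<Rightarrow> real"
  assumes "\<And>n. m \<le> n \<Longrightarrow> f n = c" shows "liminf (\<lambda>n. ereal (f n)) = ereal c"
proof -
  have "((\<lambda>n. ereal (f n)) \<longlongrightarrow> ereal c) sequentially"
    by (rule tendsto_eventually) (use assms in \<open>auto simp: eventually_sequentially\<close>)
  thus ?thesis by (intro lim_imp_Liminf) auto
qed

lemma prefix_of_funpow_snoc:
  assumes "\<And>t. \<exists>b. step t = t @ [b]"
  obtains \<omega> where "\<And>k. prefix_of \<omega> (length s + k) = (step ^^ k) s"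
proof -
  define path where "path k = (step ^^ k) s" for k
  have path_length: "length (path k) = length s + k" for k
  proof (induction k)
    case (Suc k) thus ?case using assms[of "path k"] by (auto simp: path_def)
  qed (simp add: path_def)
  have path_append: "\<exists>u. path (j + d) = path j @ u" for j d
  proof (induction d)
    case (Suc d) thus ?case using assms[of "path (j + d)"] by (fastforce simp: path_def)
  qed simp
  define \<omega> where "\<omega> i = path (Suc i) ! i" for i
  have nth_path: "path k ! i = \<omega> i" if i: "i < length s + k" for i k
  proof -
    obtain u where u: "path (k + Suc i) = path k @ u" using path_append by blast
    obtain v where v: "path (Suc i + k) = path (Suc i) @ v" using path_append by blast
    have "path k ! i = path (k + Suc i) ! i" using u i path_length by (simp add: nth_append)
    also have "\<dots> = path (Suc i) ! i" using v path_length by (simp add: nth_append add.commute)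
    finally show ?thesis by (simp add: \<omega>_def)
  qed
  have "prefix_of \<omega> (length s + k) = path k" for k
    unfolding prefix_of_def by (rule nth_equalityI) (auto simp: path_length nth_path)
  thus ?thesis unfolding path_def by (rule that)
qed

text \<open>Reality can always choose the outcome on which \<open>M\<close> does not increase; following these
  choices from \<open>s\<close> yields a path along which \<open>M\<close> stays below \<open>M s\<close>.\<close>

lemma supermartingale_ge_liminf_bound:
  assumes fsys: "forecasting_system \<phi>" and sm: "supermartingale \<phi> M"
    and lim: "\<And>\<omega>. prefix_of \<omega> (length s) = s \<Longrightarrow> ereal c \<le> liminf (\<lambda>n. ereal (M (prefix_of \<omega> n)))"
  shows "c \<le> M s"
proof -
  define next_node where
    "next_node t = (if M (t @ [True]) \<le> M t then t @ [True] else t @ [False])" for t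
  have next_node_le: "M (next_node t) \<le> M t" for t
  proof -
    have "min (M (t @ [True])) (M (t @ [False])) \<le> upper_exp_ival (lower_fs \<phi> t) (upper_fs \<phi> t) (\<lambda>x. M (t @ [x]))"
      using forecasting_system_bounds[OF fsys, of t] by (intro min_le_upper_exp_ival) auto
    also have "\<dots> \<le> M t" using sm supermartingale_iff_upper_exp_ival[OF fsys] by blast
    finally show ?thesis unfolding next_node_def by (auto simp: min_def split: if_splits)
  qed
  have "\<exists>b. next_node t = t @ [b]" for t by (auto simp: next_node_def)
  then obtain \<omega> where \<omega>: "\<And>k. prefix_of \<omega> (length s + k) = (next_node ^^ k) s"
    using prefix_of_funpow_snoc by blast
  have "M ((next_node ^^ k) s) \<le> M s" for k
    by (induction k) (auto intro: order.trans[OF next_node_le])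
  hence "liminf (\<lambda>n. ereal (M (prefix_of \<omega> n))) \<le> ereal (M s)"
    using \<omega> by (intro liminf_ereal_le_eventually[where m="length s"]) (metis le_Suc_ex)
  moreover have "prefix_of \<omega> (length s) = s" using \<omega>[of 0] by simp
  ultimately show ?thesis using lim by (meson ereal_less_eq(3) order.trans)
qed

lemma superhedges_nonneg:
  assumes "forecasting_system \<phi>" "superhedges \<phi> M G" shows "0 \<le> M s"
proof (rule supermartingale_ge_liminf_bound[OF assms(1)])
  show "supermartingale \<phi> M" using assms(2) by (simp add: superhedges_def)
  fix \<omega> show "ereal 0 \<le> liminf (\<lambda>n. ereal (M (prefix_of \<omega> n)))"
    using assms(2) unfolding superhedges_def by (metis indicator_pos_le order.trans ereal_less_eq(3))
qed

lemma superhedges_const_one: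
  assumes "forecasting_system \<phi>" shows "superhedges \<phi> (\<lambda>_. 1) G"
  unfolding superhedges_def supermartingale_iff_upper_exp_ival[OF assms]
  by (simp add: Liminf_const indicator_def)

lemma upper_prob_le_superhedge:
  assumes "forecasting_system \<phi>" "superhedges \<phi> M G" shows "upper_prob \<phi> G \<le> M []"
  unfolding upper_prob_eq_Inf_superhedges
  by (rule cInf_lower) (use assms superhedges_nonneg[OF assms(1)] in \<open>auto intro: bdd_belowI[of _ 0]\<close>)

lemma upper_prob_greatest:
  assumes "forecasting_system \<phi>" "\<And>M. superhedges \<phi> M G \<Longrightarrow> c \<le> M []"
  shows "c \<le> upper_prob \<phi> G"
  unfolding upper_prob_eq_Inf_superhedges
  by (rule cInf_greatest) (use assms superhedges_const_one[OF assms(1)] in auto)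

lemma upper_prob_mono:
  assumes fsys: "forecasting_system \<phi>" and "G \<subseteq> H" shows "upper_prob \<phi> G \<le> upper_prob \<phi> H"
proof (rule upper_prob_greatest[OF fsys])
  fix M assume "superhedges \<phi> M H"
  moreover have "indicator G \<omega> \<le> (indicator H \<omega> :: real)" for \<omega>
    using \<open>G \<subseteq> H\<close> by (auto simp: indicator_def)
  ultimately have "superhedges \<phi> M G"
    unfolding superhedges_def by (meson ereal_less_eq(3) order.trans)
  thus "upper_prob \<phi> G \<le> M []" by (rule upper_prob_le_superhedge[OF fsys])
qed

lemma superhedges_add:
  assumes fsys: "forecasting_system \<phi>" and "G \<subseteq> G1 \<union> G2"
    and M1: "superhedges \<phi> M1 G1" and M2: "superhedges \<phi> M2 G2"
  shows "superhedges \<phi> (\<lambda>s. M1 s + M2 s) G"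
proof -
  have "supermartingale \<phi> (\<lambda>s. M1 s + M2 s)"
    unfolding supermartingale_iff_upper_exp_ival[OF fsys]
  proof
    fix s
    let ?E = "upper_exp_ival (lower_fs \<phi> s) (upper_fs \<phi> s)"
    have "?E (\<lambda>x. M1 (s @ [x]) + M2 (s @ [x])) \<le> ?E (\<lambda>x. M1 (s @ [x])) + ?E (\<lambda>x. M2 (s @ [x]))"
      by (rule upper_exp_ival_add_le)
    also have "\<dots> \<le> M1 s + M2 s"
      using M1 M2 unfolding superhedges_def supermartingale_iff_upper_exp_ival[OF fsys] by (intro add_mono) auto
    finally show "?E (\<lambda>x. M1 (s @ [x]) + M2 (s @ [x])) \<le> M1 s + M2 s" .
  qed
  moreover have "ereal (indicator G \<omega>) \<le> liminf (\<lambda>n. ereal (M1 (prefix_of \<omega> n) + M2 (prefix_of \<omega> n)))" for \<omega>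
  proof -
    let ?u = "\<lambda>n. ereal (M1 (prefix_of \<omega> n))" and ?v = "\<lambda>n. ereal (M2 (prefix_of \<omega> n))"
    have lim: "ereal (indicator G1 \<omega>) \<le> liminf ?u" "ereal (indicator G2 \<omega>) \<le> liminf ?v"
      using M1 M2 by (auto simp: superhedges_def)
    have "ereal (indicator G \<omega>) \<le> ereal (indicator G1 \<omega>) + ereal (indicator G2 \<omega>)"
      using \<open>G \<subseteq> G1 \<union> G2\<close> by (auto simp: indicator_def)
    also have "\<dots> \<le> liminf ?u + liminf ?v" using lim by (rule add_mono)
    also have "\<dots> \<le> liminf (\<lambda>n. ?u n + ?v n)"
      by (rule ereal_liminf_add_mono) (use lim in \<open>auto simp: indicator_def split: if_splits\<close>)
    finally show ?thesis by simp
  qed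
  ultimately show ?thesis unfolding superhedges_def by blast
qed

lemma upper_prob_subadditive:
  assumes fsys: "forecasting_system \<phi>" and "G \<subseteq> G1 \<union> G2"
  shows "upper_prob \<phi> G \<le> upper_prob \<phi> G1 + upper_prob \<phi> G2"
proof -
  have "upper_prob \<phi> G - M2 [] \<le> upper_prob \<phi> G1" if M2: "superhedges \<phi> M2 G2" for M2
  proof (rule upper_prob_greatest[OF fsys])
    fix M1 assume "superhedges \<phi> M1 G1"
    from upper_prob_le_superhedge[OF fsys superhedges_add[OF fsys assms(2) this M2]]
    show "upper_prob \<phi> G - M2 [] \<le> M1 []" by simp
  qed
  hence "upper_prob \<phi> G - upper_prob \<phi> G1 \<le> upper_prob \<phi> G2"
    by (intro upper_prob_greatest[OF fsys]) (simp add: algebra_simps)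
  thus ?thesis by simp
qed

section \<open>Upper probability of hitting a set of short strings\<close>

fun hit_value :: "(bool list \<Rightarrow> real set) \<Rightarrow> bool list set \<Rightarrow> nat \<Rightarrow> bool list \<Rightarrow> real" where
  "hit_value \<phi> S 0 s = 0"
| "hit_value \<phi> S (Suc d) s = (if s \<in> S then 1
     else upper_exp_ival (lower_fs \<phi> s) (upper_fs \<phi> s) (\<lambda>x. hit_value \<phi> S d (s @ [x])))"

lemma hit_value_bounds:
  assumes "forecasting_system \<phi>" shows "0 \<le> hit_value \<phi> S d s" "hit_value \<phi> S d s \<le> 1"
proof -
  have "0 \<le> hit_value \<phi> S d s \<and> hit_value \<phi> S d s \<le> 1"
  proof (induction d arbitrary: s)
    case (Suc d)
    let ?E = "upper_exp_ival (lower_fs \<phi> s) (upper_fs \<phi> s)"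
    have "?E (\<lambda>_. 0) \<le> ?E (\<lambda>x. hit_value \<phi> S d (s @ [x]))" "?E (\<lambda>x. hit_value \<phi> S d (s @ [x])) \<le> ?E (\<lambda>_. 1)"
      using forecasting_system_bounds[OF assms, of s] Suc by (intro upper_exp_ival_mono; auto)+
    thus ?case by simp
  qed simp
  thus "0 \<le> hit_value \<phi> S d s" "hit_value \<phi> S d s \<le> 1" by auto
qed

lemma length_prefix_of [simp]: "length (prefix_of \<omega> n) = n"
  by (simp add: prefix_of_def)

lemma take_prefix_of: "k \<le> n \<Longrightarrow> take k (prefix_of \<omega> n) = prefix_of \<omega> k"
  by (simp add: prefix_of_def take_map min_def)

lemma mem_cyl_set_iff: "\<omega> \<in> cyl_set S \<longleftrightarrow> (\<exists>t\<in>S. prefix_of \<omega> (length t) = t)"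
  by (auto simp: cyl_set_def cyl_def)

lemma hit_value_le_superhedge:
  assumes fsys: "forecasting_system \<phi>" and M: "superhedges \<phi> M (cyl_set {s \<in> S. length s < l})"
    and "length s + d = l"
  shows "hit_value \<phi> S d s \<le> M s"
  using \<open>length s + d = l\<close>
proof (induction d arbitrary: s)
  case 0
  show ?case using superhedges_nonneg[OF fsys M] by simp
next
  case (Suc d)
  have sm: "supermartingale \<phi> M" using M by (simp add: superhedges_def)
  show ?case
  proof (cases "s \<in> S")
    case True
    have "1 \<le> M s"
    proof (rule supermartingale_ge_liminf_bound[OF fsys sm])
      fix \<omega> assume "prefix_of \<omega> (length s) = s"
      hence "\<omega> \<in> cyl_set {s \<in> S. length s < l}" using True Suc.prems unfolding mem_cyl_set_iff by auto
      thus "ereal 1 \<le> liminf (\<lambda>n. ereal (M (prefix_of \<omega> n)))" using M unfolding superhedges_def by (metis indicator_simps(1))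
    qed
    thus ?thesis using True by simp
  next
    case False
    let ?E = "upper_exp_ival (lower_fs \<phi> s) (upper_fs \<phi> s)"
    have "?E (\<lambda>x. hit_value \<phi> S d (s @ [x])) \<le> ?E (\<lambda>x. M (s @ [x]))"
      using forecasting_system_bounds[OF fsys, of s] Suc by (intro upper_exp_ival_mono) auto
    also have "\<dots> \<le> M s" using sm supermartingale_iff_upper_exp_ival[OF fsys] by blast
    finally show ?thesis using False by simp
  qed
qed

definition hits_before :: "bool list set \<Rightarrow> nat \<Rightarrow> bool list \<Rightarrow> bool" where
  "hits_before S l s \<longleftrightarrow> (\<exists>k\<le>length s. k < l \<and> take k s \<in> S)"

lemma hits_before_snoc:
  "hits_before S l (s @ [x]) \<longleftrightarrow> hits_before S l s \<or> (Suc (length s) < l \<and> s @ [x] \<in> S)"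
  unfolding hits_before_def by (auto simp: take_append le_Suc_eq)

lemma hits_before_prefix_of:
  assumes "l \<le> n" shows "hits_before S l (prefix_of \<omega> n) \<longleftrightarrow> \<omega> \<in> cyl_set {s \<in> S. length s < l}"
  using assms unfolding hits_before_def mem_cyl_set_iff
  by (auto simp: take_prefix_of) (metis length_prefix_of less_imp_le_nat order.trans take_prefix_of)

definition hit_strategy :: "(bool list \<Rightarrow> real set) \<Rightarrow> bool list set \<Rightarrow> nat \<Rightarrow> bool list \<Rightarrow> real" where
  "hit_strategy \<phi> S l s = (if hits_before S l s then 1 else hit_value \<phi> S (l - length s) s)"

lemma superhedges_hit_strategy:
  assumes fsys: "forecasting_system \<phi>"
  shows "superhedges \<phi> (hit_strategy \<phi> S l) (cyl_set {s \<in> S. length s < l})"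
proof -
  let ?M = "hit_strategy \<phi> S l"
  have "upper_exp_ival (lower_fs \<phi> s) (upper_fs \<phi> s) (\<lambda>x. ?M (s @ [x])) \<le> ?M s" for s
  proof (cases "hits_before S l s")
    case True thus ?thesis by (simp add: hit_strategy_def hits_before_snoc)
  next
    case nohit: False
    show ?thesis
    proof (cases "l \<le> length s")
      case True thus ?thesis using nohit by (simp add: hit_strategy_def hits_before_snoc)
    next
      case False
      then obtain d where d: "l - length s = Suc d" by (metis Suc_diff_Suc not_le)
      have "s \<notin> S" using nohit False unfolding hits_before_def by (metis le_refl not_le take_all)
      moreover have "?M (s @ [x]) = hit_value \<phi> S d (s @ [x])" for x
      proof -
        have len: "l - Suc (length s) = d" using d by simp
        show ?thesis
        proof (cases "hits_before S l (s @ [x])")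
          case True
          hence "s @ [x] \<in> S" "d \<noteq> 0" using nohit d by (auto simp: hits_before_snoc)
          thus ?thesis using True len by (cases d) (auto simp: hit_strategy_def)
        qed (simp add: hit_strategy_def len)
      qed
      ultimately show ?thesis using nohit d by (simp add: hit_strategy_def)
    qed
  qed
  moreover have "liminf (\<lambda>n. ereal (?M (prefix_of \<omega> n))) = ereal (indicator (cyl_set {s \<in> S. length s < l}) \<omega>)" for \<omega>
    by (rule liminf_ereal_eventually_const[where m=l])
       (simp add: hit_strategy_def hits_before_prefix_of indicator_def)
  ultimately show ?thesis unfolding superhedges_def supermartingale_iff_upper_exp_ival[OF fsys] by simp
qed

lemma upper_prob_cyl_set_short:
  assumes fsys: "forecasting_system \<phi>"
  shows "upper_prob \<phi> (cyl_set {s \<in> S. length s < l}) = hit_value \<phi> S l []"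
proof (rule antisym)
  have "hit_strategy \<phi> S l [] = hit_value \<phi> S l []"
    by (cases l) (auto simp: hit_strategy_def hits_before_def)
  thus "upper_prob \<phi> (cyl_set {s \<in> S. length s < l}) \<le> hit_value \<phi> S l []"
    using upper_prob_le_superhedge[OF fsys superhedges_hit_strategy[OF fsys, of S l]] by simp
  show "hit_value \<phi> S l [] \<le> upper_prob \<phi> (cyl_set {s \<in> S. length s < l})"
    by (rule upper_prob_greatest[OF fsys]) (rule hit_value_le_superhedge[OF fsys], auto)
qed

section \<open>Codes of nonnegative rationals\<close>

definition code_val :: "nat \<Rightarrow> real" where
  "code_val z = real (unpair1 z) / real (unpair2 z + 1)"

definition code_rat :: "nat \<Rightarrow> rat" where
  "code_rat z = of_nat (unpair1 z) / of_nat (unpair2 z + 1)"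

lemma of_rat_code_rat: "real_of_rat (code_rat z) = code_val z"
  by (simp add: code_rat_def code_val_def of_rat_divide of_rat_add)

lemma code_val_nonneg: "0 \<le> code_val z"
  by (simp add: code_val_def)

lemma code_val_le_one_iff: "code_val z \<le> 1 \<longleftrightarrow> unpair1 z \<le> unpair2 z + 1"
  unfolding code_val_def by (simp add: divide_le_eq_1 del: of_nat_Suc)

definition clamp_code :: "nat \<Rightarrow> nat \<Rightarrow> nat \<Rightarrow> nat" where
  "clamp_code a b c = (if a - b - c = 0 then pair (a - b) c else pair 1 0)"

lemma clamp_code:
  assumes "0 \<le> p" "p \<le> 1"
  shows "code_val (clamp_code a b c) \<le> 1"
    and "\<bar>code_val (clamp_code a b c) - p\<bar> \<le> \<bar>(real a - real b) / (real c + 1) - p\<bar>"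
proof -
  show "code_val (clamp_code a b c) \<le> 1" by (auto simp: clamp_code_def code_val_le_one_iff)
  show "\<bar>code_val (clamp_code a b c) - p\<bar> \<le> \<bar>(real a - real b) / (real c + 1) - p\<bar>"
  proof (cases "a \<le> b")
    case True
    hence "(real a - real b) / (real c + 1) \<le> 0" by (simp add: divide_nonpos_pos)
    thus ?thesis using True assms by (simp add: clamp_code_def code_val_def)
  next
    case nle: False
    show ?thesis
    proof (cases "a - b \<le> c")
      case True
      thus ?thesis using nle by (simp add: clamp_code_def code_val_def of_nat_diff add.commute)
    next
      case False
      hence "1 \<le> (real a - real b) / (real c + 1)" using nle by (simp add: le_divide_eq)
      moreover have "code_val (clamp_code a b c) = 1" using False by (simp add: clamp_code_def code_val_def)
      ultimately show ?thesis using assms by linarith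
    qed
  qed
qed

text \<open>The truncated subtraction in \<open>mix_code\<close> is harmless once \<open>code_val a \<le> 1\<close>.\<close>

definition mix_code :: "nat \<Rightarrow> nat \<Rightarrow> nat \<Rightarrow> nat" where
  "mix_code a u v = pair
     (unpair1 a * unpair1 u * (unpair2 v + 1) + (unpair2 a + 1 - unpair1 a) * unpair1 v * (unpair2 u + 1))
     ((unpair2 a + 1) * (unpair2 u + 1) * (unpair2 v + 1) - 1)"

lemma code_val_mix_code:
  assumes "code_val a \<le> 1"
  shows "code_val (mix_code a u v) = code_val a * code_val u + (1 - code_val a) * code_val v"
proof -
  have frac: "(A * U * V' + (A' - A) * V * U') / (A' * U' * V') = A / A' * (U / U') + (1 - A / A') * (V / V')"
    if "A' > 0" "U' > 0" "V' > 0" for A A' U U' V V' :: real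
    using that by (simp add: field_simps)
  have "real (unpair2 a + 1 - unpair1 a) = real (unpair2 a) + 1 - real (unpair1 a)"
    using assms by (simp add: code_val_le_one_iff of_nat_diff)
  moreover have "(unpair2 a + 1) * (unpair2 u + 1) * (unpair2 v + 1) - 1 + 1
      = (unpair2 a + 1) * (unpair2 u + 1) * (unpair2 v + 1)" by simp
  ultimately show ?thesis
    unfolding mix_code_def code_val_def unpair_pair of_nat_add of_nat_mult
    using frac[of "real (unpair2 a) + 1" "real (unpair2 u) + 1" "real (unpair2 v) + 1"
        "real (unpair1 a)" "real (unpair1 u)" "real (unpair1 v)"]
    by (simp add: algebra_simps)
qed

definition max_code :: "nat \<Rightarrow> nat \<Rightarrow> nat" where
  "max_code u w = (if unpair1 u * (unpair2 w + 1) - unpair1 w * (unpair2 u + 1) = 0 then w else u)"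

lemma code_val_max_code: "code_val (max_code u w) = max (code_val u) (code_val w)"
proof -
  have "unpair1 u * (unpair2 w + 1) - unpair1 w * (unpair2 u + 1) = 0
      \<longleftrightarrow> real (unpair1 u * (unpair2 w + 1)) \<le> real (unpair1 w * (unpair2 u + 1))"
    by (simp only: diff_is_0_eq of_nat_le_iff)
  also have "\<dots> \<longleftrightarrow> code_val u \<le> code_val w"
    unfolding code_val_def by (simp add: field_simps)
  finally show ?thesis by (simp add: max_code_def max_def)
qed

definition upper_mix_code :: "nat \<Rightarrow> nat \<Rightarrow> nat \<Rightarrow> nat \<Rightarrow> nat" where
  "upper_mix_code lo hi u v = max_code (mix_code lo u v) (mix_code hi u v)"

lemma code_val_upper_mix_code:
  assumes "code_val lo \<le> 1" "code_val hi \<le> 1"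
  shows "code_val (upper_mix_code lo hi u v) =
    upper_exp_ival (code_val lo) (code_val hi) (\<lambda>x. if x then code_val u else code_val v)"
  using assms by (simp add: upper_mix_code_def code_val_max_code code_val_mix_code upper_exp_ival_def)

lemma upper_mix_code_le_one:
  assumes "code_val lo \<le> 1" "code_val hi \<le> 1" "code_val u \<le> 1" "code_val v \<le> 1"
  shows "code_val (upper_mix_code lo hi u v) \<le> 1"
proof -
  have "upper_exp_ival (code_val lo) (code_val hi) (\<lambda>x. if x then code_val u else code_val v)
      \<le> upper_exp_ival (code_val lo) (code_val hi) (\<lambda>_. 1)"
    unfolding upper_exp_ival_def using assms code_val_nonneg
    by (intro max.mono add_mono mult_left_mono) auto
  thus ?thesis using assms by (simp add: code_val_upper_mix_code)
qed

lemma mix_dist_le: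
  fixes a a' u u' v v' e d :: real
  assumes "0 \<le> a'" "a' \<le> 1" "\<bar>a' - a\<bar> \<le> d" "0 \<le> u" "u \<le> 1" "0 \<le> v" "v \<le> 1"
    "\<bar>u' - u\<bar> \<le> e" "\<bar>v' - v\<bar> \<le> e"
  shows "\<bar>(a' * u' + (1 - a') * v') - (a * u + (1 - a) * v)\<bar> \<le> e + d"
proof -
  have "(a' * u' + (1 - a') * v') - (a * u + (1 - a) * v) = a' * (u' - u) + (1 - a') * (v' - v) + (a' - a) * (u - v)"
    by (simp add: algebra_simps)
  moreover have "\<bar>a' * (u' - u)\<bar> \<le> a' * e" "\<bar>(1 - a') * (v' - v)\<bar> \<le> (1 - a') * e"
    using assms by (simp_all add: abs_mult mult_left_mono)
  moreover have "\<bar>(a' - a) * (u - v)\<bar> \<le> d * 1"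
    unfolding abs_mult by (rule mult_mono) (use assms in auto)
  ultimately show ?thesis by (simp add: algebra_simps)
qed

lemma upper_exp_ival_dist_le:
  assumes "0 \<le> a'" "a' \<le> 1" "\<bar>a' - a\<bar> \<le> d" "0 \<le> b'" "b' \<le> 1" "\<bar>b' - b\<bar> \<le> d"
    "\<And>x. 0 \<le> f x" "\<And>x. f x \<le> 1" "\<And>x. \<bar>g x - f x\<bar> \<le> e"
  shows "\<bar>upper_exp_ival a' b' g - upper_exp_ival a b f\<bar> \<le> e + d"
proof -
  have "\<bar>(c' * g True + (1 - c') * g False) - (c * f True + (1 - c) * f False)\<bar> \<le> e + d"
    if "0 \<le> c'" "c' \<le> 1" "\<bar>c' - c\<bar> \<le> d" for c c'
    by (rule mix_dist_le) (use that assms in auto)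
  from this[of a' a] this[of b' b] show ?thesis
    unfolding upper_exp_ival_def using assms(1-6) by (auto simp: max_def abs_le_iff)
qed

lemma recursive1_clamp_code [intro]:
  "recursive1 A \<Longrightarrow> recursive1 B \<Longrightarrow> recursive1 C \<Longrightarrow> recursive1 (\<lambda>x. clamp_code (A x) (B x) (C x))"
  unfolding clamp_code_def by (intro recursive1_If recursive1_pair recursive1_diff recursive1_const)

lemma recursive1_upper_mix_code [intro]:
  "recursive1 A \<Longrightarrow> recursive1 B \<Longrightarrow> recursive1 C \<Longrightarrow> recursive1 D \<Longrightarrow>
    recursive1 (\<lambda>x. upper_mix_code (A x) (B x) (C x) (D x))"
  unfolding upper_mix_code_def max_code_def mix_code_def
  by (intro recursive1_If recursive1_pair recursive1_diff recursive1_const recursive1_add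
      recursive1_mult recursive1_unpair)

definition rev_step :: "nat \<Rightarrow> nat" where
  "rev_step z = (if unpair2 z = 0 then z
     else pair (Suc (pair (unpair1 (unpair2 z - 1)) (unpair1 z))) (unpair2 (unpair2 z - 1)))"

definition rev_code :: "nat \<Rightarrow> nat" where
  "rev_code r = unpair1 ((rev_step ^^ r) (pair 0 r))"

lemma length_le_list_encode: "length xs \<le> list_encode xs"
proof (induction xs)
  case (Cons x xs)
  thus ?case using le_prod_encode_2[where a=x and b="list_encode xs"] by simp
qed simp

lemma rev_step_funpow:
  "(rev_step ^^ k) (pair (list_encode acc) (list_encode xs)) =
     pair (list_encode (rev (take k xs) @ acc)) (list_encode (drop k xs))"
proof (induction k arbitrary: acc xs)
  case (Suc k)
  show ?case
  proof (cases xs)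
    case Nil
    have "(rev_step ^^ k) (pair (list_encode acc) 0) = pair (list_encode acc) 0" for k
      by (induction k) (auto simp: rev_step_def)
    from this[of "Suc k"] show ?thesis using Nil by simp
  next
    case (Cons y ys)
    have "rev_step (pair (list_encode acc) (list_encode xs)) = pair (list_encode (y # acc)) (list_encode ys)"
      using Cons by (simp add: rev_step_def)
    thus ?thesis using Suc[of "y # acc" ys] Cons by (simp del: funpow.simps add: funpow_Suc_right)
  qed
qed simp

lemma rev_code_list_encode: "rev_code (list_encode xs) = list_encode (rev xs)"
  using rev_step_funpow[of "list_encode xs" "[]" xs] length_le_list_encode[of xs]
  unfolding rev_code_def by simp

lemma recursive1_rev_code [intro]: "recursive1 F \<Longrightarrow> recursive1 (\<lambda>x. rev_code (F x))"
proof -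
  have "recursive1 rev_step" unfolding rev_step_def
    by (intro recursive1_If recursive1_pair recursive1_unpair recursive1_id recursive1_Suc
        recursive1_diff recursive1_const)
  hence "recursive1 rev_code" unfolding rev_code_def
    by (intro recursive1_unpair recursive1_funpow recursive1_pair recursive1_const recursive1_id)
  thus "recursive1 F \<Longrightarrow> recursive1 (\<lambda>x. rev_code (F x))" by (rule recursive1_comp)
qed

section \<open>Computing the hitting value by a stack machine\<close>

text \<open>The parameters test membership of a string code in the target set and give rational codes
  approximating the lower and upper forecasts at a string code; the extra argument \<open>x\<close> will carry the
  index \<open>n\<close> of the test and the required precision.\<close>

context
  fixes member lo hi :: "nat \<Rightarrow> nat \<Rightarrow> nat"
begin

fun hit_code :: "nat \<Rightarrow> nat \<Rightarrow> bool list \<Rightarrow> nat" where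
  "hit_code x 0 s = pair 0 0"
| "hit_code x (Suc d) s = (if member x (enc_str s) = 0
     then upper_mix_code (lo x (enc_str s)) (hi x (enc_str s)) (hit_code x d (s @ [True])) (hit_code x d (s @ [False]))
     else pair 1 0)"

lemma hit_code_approx:
  assumes fsys: "forecasting_system \<phi>"
    and member: "\<And>s. member x (enc_str s) \<noteq> 0 \<longleftrightarrow> s \<in> S"
    and lo: "\<And>s. code_val (lo x (enc_str s)) \<le> 1 \<and> \<bar>code_val (lo x (enc_str s)) - lower_fs \<phi> s\<bar> \<le> \<delta>"
    and hi: "\<And>s. code_val (hi x (enc_str s)) \<le> 1 \<and> \<bar>code_val (hi x (enc_str s)) - upper_fs \<phi> s\<bar> \<le> \<delta>"
  shows "code_val (hit_code x d s) \<le> 1 \<and> \<bar>code_val (hit_code x d s) - hit_value \<phi> S d s\<bar> \<le> d * \<delta>"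
proof (induction d arbitrary: s)
  case 0 thus ?case by (simp add: code_val_def)
next
  case (Suc d)
  show ?case
  proof (cases "member x (enc_str s) = 0")
    case False
    have "0 \<le> \<delta>" using lo[of "[]"] by (meson abs_ge_zero order_trans)
    thus ?thesis using False member[of s] by (simp add: code_val_def)
  next
    case True
    let ?lo = "lo x (enc_str s)" and ?hi = "hi x (enc_str s)"
    let ?V = "\<lambda>b. code_val (hit_code x d (s @ [b]))"
    have "s \<notin> S" using True member by blast
    have "\<bar>upper_exp_ival (code_val ?lo) (code_val ?hi) (\<lambda>b. if b then ?V True else ?V False)
        - upper_exp_ival (lower_fs \<phi> s) (upper_fs \<phi> s) (\<lambda>b. hit_value \<phi> S d (s @ [b]))\<bar> \<le> d * \<delta> + \<delta>"
      using lo[of s] hi[of s] Suc hit_value_bounds[OF fsys]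
      by (intro upper_exp_ival_dist_le) (auto simp: code_val_nonneg)
    moreover have "code_val (hit_code x (Suc d) s) \<le> 1"
      using True lo[of s] hi[of s] Suc by (simp add: upper_mix_code_le_one)
    ultimately show ?thesis using True \<open>s \<notin> S\<close> lo[of s] hi[of s]
      by (simp add: code_val_upper_mix_code algebra_simps)
  qed
qed

text \<open>A state \<open>pair tasks values\<close> of the machine consists of two stacks encoded by \<open>list_encode\<close>.
  The task \<open>task 0 d s\<close> asks for \<open>hit_code x d s\<close> to be pushed onto the value stack; \<open>task 1 d s\<close>
  replaces the two topmost values by their combination at node \<open>s\<close>. Strings are stored reversed,
  so that extending a string is a cons; recall that \<open>Suc (pair a l)\<close> codes \<open>a # l\<close>.\<close>

definition task :: "nat \<Rightarrow> nat \<Rightarrow> bool list \<Rightarrow> nat" where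
  "task tag d s = pair tag (pair d (list_encode (map of_bool (rev s))))"

definition machine_step :: "nat \<Rightarrow> nat \<Rightarrow> nat" where
  "machine_step x z = (if unpair1 z = 0 then z else
     let tasks = unpair1 z - 1; vals = unpair2 z; t = unpair1 tasks; rest = unpair2 tasks;
         d = unpair1 (unpair2 t); r = unpair2 (unpair2 t); c = rev_code r in
     if unpair1 t = 0 then
       (if d = 0 then pair rest (Suc (pair (pair 0 0) vals))
        else if member x c = 0 then
          pair (Suc (pair (pair 0 (pair (d - 1) (Suc (pair 1 r))))
                (Suc (pair (pair 0 (pair (d - 1) (Suc (pair 0 r))))
                (Suc (pair (pair 1 (pair d r)) rest)))))) vals
        else pair rest (Suc (pair (pair 1 0) vals)))
     else pair rest (Suc (pair (upper_mix_code (lo x c) (hi x c)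
            (unpair1 (unpair2 (vals - 1) - 1)) (unpair1 (vals - 1))) (unpair2 (unpair2 (vals - 1) - 1)))))"

fun hit_steps :: "nat \<Rightarrow> nat \<Rightarrow> bool list \<Rightarrow> nat" where
  "hit_steps x 0 s = 1"
| "hit_steps x (Suc d) s = (if member x (enc_str s) = 0
     then hit_steps x d (s @ [True]) + hit_steps x d (s @ [False]) + 2 else 1)"

lemma rev_code_task_string: "rev_code (list_encode (map of_bool (rev s))) = enc_str s"
  by (simp add: rev_code_list_encode enc_str_def rev_map)

lemma machine_run:
  "(machine_step x ^^ hit_steps x d s) (pair (list_encode (task 0 d s # ts)) (list_encode vs))
     = pair (list_encode ts) (list_encode (hit_code x d s # vs))"
proof (induction d arbitrary: s ts vs)
  case 0 show ?case by (simp add: machine_step_def task_def)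
next
  case (Suc d)
  show ?case
  proof (cases "member x (enc_str s) = 0")
    case False thus ?thesis by (simp add: machine_step_def task_def rev_code_task_string Let_def)
  next
    case True
    let ?f = "machine_step x"
    have steps: "(?f ^^ (a + b + 2)) z = ?f ((?f ^^ b) ((?f ^^ a) (?f z)))" for a b z
    proof -
      have "a + b + 2 = Suc (b + Suc a)" by simp
      thus ?thesis by (simp only: funpow.simps(2) funpow_add funpow_Suc_right comp_def funpow_swap1)
    qed
    have expand: "?f (pair (list_encode (task 0 (Suc d) s # ts)) (list_encode vs)) =
        pair (list_encode (task 0 d (s @ [True]) # task 0 d (s @ [False]) # task 1 (Suc d) s # ts))
          (list_encode vs)"
      using True by (simp add: machine_step_def task_def rev_code_task_string Let_def)
    have combine: "?f (pair (list_encode (task 1 (Suc d) s # ts))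
          (list_encode (hit_code x d (s @ [False]) # hit_code x d (s @ [True]) # vs)))
        = pair (list_encode ts) (list_encode (hit_code x (Suc d) s # vs))"
      using True by (simp add: machine_step_def task_def rev_code_task_string Let_def)
    have "hit_steps x (Suc d) s = hit_steps x d (s @ [True]) + hit_steps x d (s @ [False]) + 2"
      using True by simp
    thus ?thesis by (simp only: steps expand Suc.IH combine)
  qed
qed

lemma machine_halted: "(machine_step x ^^ k) (pair 0 v) = pair 0 v"
  by (induction k) (auto simp: machine_step_def)

lemma hit_steps_le: "hit_steps x d s \<le> 2 ^ (d + 2)"
proof -
  have "hit_steps x d s + 2 \<le> 2 ^ (d + 2)"
  proof (induction d arbitrary: s)
    case (Suc d)
    have "hit_steps x d (s @ [True]) + hit_steps x d (s @ [False]) + 2 + 2 \<le> 2 ^ (d + 2) + 2 ^ (d + 2)"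
      using Suc.IH[of "s @ [True]"] Suc.IH[of "s @ [False]"] by simp
    thus ?case by auto
  qed simp
  thus ?thesis by simp
qed

lemma machine_computes_hit_code:
  "(machine_step x ^^ 2 ^ (d + 2)) (pair (list_encode [task 0 d []]) 0)
     = pair 0 (list_encode [hit_code x d []])"
proof -
  have k: "2 ^ (d + 2) = (2 ^ (d + 2) - hit_steps x d []) + hit_steps x d []"
    using hit_steps_le[of x d "[]"] by simp
  show ?thesis
    using machine_run[of x d "[]" "[]" "[]"] machine_halted
    by (subst k, simp only: funpow_add comp_def) simp
qed

lemma recursive1_hit_code:
  assumes "recursive2 member" "recursive2 lo" "recursive2 hi" "recursive1 L"
  shows "recursive1 (\<lambda>x. hit_code x (L x) [])"
proof -
  have "recursive2 machine_step" unfolding recursive2_iff machine_step_def Let_def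
    by (intro recursive1_If recursive1_pair recursive1_diff recursive1_const recursive1_id
        recursive1_Suc recursive1_unpair recursive1_rev_code recursive1_upper_mix_code
        recursive2_comp[OF assms(1)] recursive2_comp[OF assms(2)] recursive2_comp[OF assms(3)])
  moreover have "recursive1 (\<lambda>x. pair (list_encode [task 0 (L x) []]) 0)"
    by (simp add: task_def) (intro recursive1_pair recursive1_Suc recursive1_const assms(4))
  ultimately have "recursive1 (\<lambda>x. unpair1 (unpair2 ((machine_step x ^^ 2 ^ (L x + 2))
      (pair (list_encode [task 0 (L x) []]) 0)) - 1))"
    by (intro recursive1_unpair recursive1_diff recursive1_funpow_param recursive1_power2 recursive1_add
        recursive1_const assms(4))
  thus ?thesis unfolding machine_computes_hit_code by simp
qed

end

section \<open>Computability of the levels of a Schnorr test\<close>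

lemma computable_real_clamp_code:
  fixes enc :: "'d \<Rightarrow> nat"
  assumes "computable_real enc f" "\<And>d. 0 \<le> f d" "\<And>d. f d \<le> 1"
  obtains g where "recursive1 g"
    "\<And>d K. code_val (g (pair (enc d) K)) \<le> 1 \<and> \<bar>code_val (g (pair (enc d) K)) - f d\<bar> \<le> (1/2) ^ K"
proof -
  obtain q where q: "recursive_rat q" "\<And>d K. \<bar>f d - real_of_rat (q (pair (enc d) K))\<bar> \<le> (1/2) ^ K"
    using assms(1) unfolding computable_real_def by blast
  then obtain a b c where abc: "recursive1 a" "recursive1 b" "recursive1 c"
    "\<And>y. q y = (of_nat (a y) - of_nat (b y)) / of_nat (c y + 1)"
    unfolding recursive_rat_def by blast
  have "code_val (clamp_code (a y) (b y) (c y)) \<le> 1 \<and>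
      \<bar>code_val (clamp_code (a y) (b y) (c y)) - f d\<bar> \<le> \<bar>f d - real_of_rat (q y)\<bar>" for d y
    using clamp_code[of "f d" "a y" "b y" "c y"] assms(2,3)[of d]
    by (simp add: abc(4) of_rat_divide of_rat_diff of_rat_add abs_minus_commute add.commute)
  with q(2) have "code_val (clamp_code (a y) (b y) (c y)) \<le> 1 \<and>
      \<bar>code_val (clamp_code (a y) (b y) (c y)) - f d\<bar> \<le> (1/2) ^ K" if "y = pair (enc d) K" for d y K
    using that by (meson order.trans)
  moreover have "recursive1 (\<lambda>y. clamp_code (a y) (b y) (c y))" using abc by auto
  ultimately show ?thesis using that by blast
qed

lemma computable_fs_clamp_codes:
  assumes "forecasting_system \<phi>" "computable_fs \<phi>"
  obtains gL gU where "recursive1 gL" "\<And>s K. code_val (gL (pair (enc_str s) K)) \<le> 1 \<and>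
      \<bar>code_val (gL (pair (enc_str s) K)) - lower_fs \<phi> s\<bar> \<le> (1/2) ^ K"
    and "recursive1 gU" "\<And>s K. code_val (gU (pair (enc_str s) K)) \<le> 1 \<and>
      \<bar>code_val (gU (pair (enc_str s) K)) - upper_fs \<phi> s\<bar> \<le> (1/2) ^ K"
proof -
  have bounds: "\<And>s. 0 \<le> lower_fs \<phi> s" "\<And>s. lower_fs \<phi> s \<le> 1"
    "\<And>s. 0 \<le> upper_fs \<phi> s" "\<And>s. upper_fs \<phi> s \<le> 1"
    using forecasting_system_bounds[OF assms(1)] by (meson order.trans)+
  have "computable_real enc_str (lower_fs \<phi>)" "computable_real enc_str (upper_fs \<phi>)"
    using assms(2) unfolding computable_fs_def by auto
  from computable_real_clamp_code[OF this(1) bounds(1,2)] computable_real_clamp_code[OF this(2) bounds(3,4)]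
  show ?thesis using that by metis
qed

lemma recursive_rat_code_rat: "recursive1 h \<Longrightarrow> recursive_rat (\<lambda>x. code_rat (h x))"
  unfolding recursive_rat_def code_rat_def
  by (rule exI[of _ "\<lambda>x. unpair1 (h x)"], rule exI[of _ "\<lambda>_. 0"], rule exI[of _ "\<lambda>x. unpair2 (h x)"]) auto

lemma upper_prob_cyl_set_truncation:
  assumes fsys: "forecasting_system \<phi>"
    and tail: "upper_prob \<phi> (cyl_set S - cyl_set {s \<in> S. length s < l}) \<le> \<epsilon>"
  shows "\<bar>upper_prob \<phi> (cyl_set S) - hit_value \<phi> S l []\<bar> \<le> \<epsilon>"
proof -
  have "hit_value \<phi> S l [] \<le> upper_prob \<phi> (cyl_set S)"
    unfolding upper_prob_cyl_set_short[OF fsys, symmetric]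
    by (rule upper_prob_mono[OF fsys]) (auto simp: cyl_set_def)
  moreover have "upper_prob \<phi> (cyl_set S)
      \<le> upper_prob \<phi> (cyl_set S - cyl_set {s \<in> S. length s < l}) + hit_value \<phi> S l []"
    unfolding upper_prob_cyl_set_short[OF fsys, symmetric] by (rule upper_prob_subadditive[OF fsys]) auto
  ultimately show ?thesis using tail by linarith
qed

lemma real_mult_half_power_le: "real l * (1/2) ^ (Suc N + l) \<le> (1/2) ^ Suc N"
proof -
  have "real l \<le> 2 ^ l" using less_exp[of l] by (metis less_imp_le of_nat_le_iff of_nat_numeral of_nat_power)
  hence "real l * (1/2) ^ l \<le> 1" by (simp add: power_one_over field_simps)
  hence "real l * (1/2) ^ l * (1/2) ^ Suc N \<le> 1 * (1/2) ^ Suc N" by (intro mult_right_mono) auto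
  thus ?thesis by (simp add: power_add algebra_simps)
qed

text \<open>Half of the error budget \<open>(1/2)^N\<close> goes to cutting the test level at length \<open>l\<close>, the other
  half to the \<open>l\<close> rounding errors of the forecasts, which is why they are computed to precision
  \<open>Suc N + l\<close>.\<close>

lemma upper_prob_approx_hit_code:
  assumes fsys: "forecasting_system \<phi>"
    and member: "\<And>s. member x (enc_str s) \<noteq> 0 \<longleftrightarrow> s \<in> S"
    and lo: "\<And>s. code_val (lo x (enc_str s)) \<le> 1 \<and> \<bar>code_val (lo x (enc_str s)) - lower_fs \<phi> s\<bar> \<le> (1/2) ^ (Suc N + l)"
    and hi: "\<And>s. code_val (hi x (enc_str s)) \<le> 1 \<and> \<bar>code_val (hi x (enc_str s)) - upper_fs \<phi> s\<bar> \<le> (1/2) ^ (Suc N + l)"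
    and tail: "upper_prob \<phi> (cyl_set S - cyl_set {s \<in> S. length s < l}) \<le> (1/2) ^ Suc N"
  shows "\<bar>upper_prob \<phi> (cyl_set S) - code_val (hit_code member lo hi x l [])\<bar> \<le> (1/2) ^ N"
proof -
  have "\<bar>code_val (hit_code member lo hi x l []) - hit_value \<phi> S l []\<bar> \<le> (1/2) ^ Suc N"
    using hit_code_approx[where member=member and lo=lo and hi=hi, OF fsys member lo hi, of l "[]"]
      real_mult_half_power_le[of l N] by linarith
  moreover have "\<bar>upper_prob \<phi> (cyl_set S) - hit_value \<phi> S l []\<bar> \<le> (1/2) ^ Suc N"
    by (rule upper_prob_cyl_set_truncation[OF fsys tail])
  ultimately show ?thesis unfolding abs_le_iff power_Suc by linarith
qed

lemma computable_real_upper_prob_cyl_sets: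
  fixes S :: "nat \<Rightarrow> bool list set"
  assumes fsys: "forecasting_system \<phi>"
    and member: "recursive2 member" "\<And>n s. member n (enc_str s) \<noteq> 0 \<longleftrightarrow> s \<in> S n"
    and modulus: "recursive2 e"
      "\<And>N n. upper_prob \<phi> (cyl_set (S n) - cyl_set {s \<in> S n. length s < e N n}) \<le> (1/2) ^ N"
    and gL: "recursive1 gL" "\<And>s K. code_val (gL (pair (enc_str s) K)) \<le> 1 \<and>
      \<bar>code_val (gL (pair (enc_str s) K)) - lower_fs \<phi> s\<bar> \<le> (1/2) ^ K"
    and gU: "recursive1 gU" "\<And>s K. code_val (gU (pair (enc_str s) K)) \<le> 1 \<and>
      \<bar>code_val (gU (pair (enc_str s) K)) - upper_fs \<phi> s\<bar> \<le> (1/2) ^ K"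
  shows "computable_real (\<lambda>n::nat. n) (\<lambda>n. upper_prob \<phi> (cyl_set (S n)))"
proof -
  define L where "L x = e (Suc (unpair2 x)) (unpair1 x)" for x
  define member' where "member' x c = member (unpair1 x) c" for x c
  define lo where "lo x c = gL (pair c (Suc (unpair2 x) + L x))" for x c
  define hi where "hi x c = gU (pair c (Suc (unpair2 x) + L x))" for x c
  have "recursive1 L" unfolding L_def by (intro recursive2_comp[OF modulus(1)] recursive1_Suc recursive1_unpair recursive1_id)
  have "recursive2 member'" unfolding recursive2_iff member'_def
    by (intro recursive2_comp[OF member(1)] recursive1_unpair recursive1_id)
  moreover have "recursive2 lo" "recursive2 hi" unfolding recursive2_iff lo_def hi_def
    by (intro recursive1_comp[OF gL(1)] recursive1_comp[OF gU(1)] recursive1_comp[OF \<open>recursive1 L\<close>]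
        recursive1_pair recursive1_add recursive1_Suc recursive1_unpair recursive1_id)+
  ultimately have rat: "recursive_rat (\<lambda>x. code_rat (hit_code member' lo hi x (L x) []))"
    by (intro recursive_rat_code_rat recursive1_hit_code \<open>recursive1 L\<close>)
  have "\<bar>upper_prob \<phi> (cyl_set (S n))
      - real_of_rat (code_rat (hit_code member' lo hi (pair n N) (L (pair n N)) []))\<bar> \<le> (1/2) ^ N" for n N
    unfolding of_rat_code_rat
  proof (rule upper_prob_approx_hit_code[OF fsys])
    show "member' (pair n N) (enc_str s) \<noteq> 0 \<longleftrightarrow> s \<in> S n" for s
      unfolding member'_def unpair_pair by (rule member(2))
    show "code_val (lo (pair n N) (enc_str s)) \<le> 1 \<and>
        \<bar>code_val (lo (pair n N) (enc_str s)) - lower_fs \<phi> s\<bar> \<le> (1/2) ^ (Suc N + L (pair n N))" for s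
      unfolding lo_def unpair_pair by (rule gL(2))
    show "code_val (hi (pair n N) (enc_str s)) \<le> 1 \<and>
        \<bar>code_val (hi (pair n N) (enc_str s)) - upper_fs \<phi> s\<bar> \<le> (1/2) ^ (Suc N + L (pair n N))" for s
      unfolding hi_def unpair_pair by (rule gU(2))
    show "upper_prob \<phi> (cyl_set (S n) - cyl_set {s \<in> S n. length s < L (pair n N)}) \<le> (1/2) ^ Suc N"
      using modulus(2)[where N="Suc N" and n=n] by (simp add: L_def)
  qed
  with rat show ?thesis unfolding computable_real_def by blast
qed

theorem proposition5p5:
  fixes \<phi> :: "bool list \<Rightarrow> real set" and A :: "(nat \<times> bool list) set"
  assumes "forecasting_system \<phi>" and "computable_fs \<phi>" and "schnorr_test \<phi> A"
  shows "computable_real (\<lambda>n::nat. n) (\<lambda>n. upper_prob \<phi> (cyl_set (section_of A n)))"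
proof -
  obtain fA where fA: "recursive1 fA" "\<And>n s. fA (pair n (enc_str s)) = (if (n, s) \<in> A then 1 else 0)"
    using assms(3) unfolding schnorr_test_def recursive_set_def by blast
  hence member: "recursive2 (\<lambda>n c. fA (pair n c))" unfolding recursive2_def by blast
  obtain e where e: "recursive2 e" "\<And>N n l. e N n \<le> l \<Longrightarrow>
      upper_prob \<phi> (cyl_set (section_of A n) - cyl_set (section_lt A n l)) \<le> (1/2) ^ N"
    using assms(3) unfolding schnorr_test_def by blast
  obtain gL gU where gL: "recursive1 gL" "\<And>s K. code_val (gL (pair (enc_str s) K)) \<le> 1 \<and>
      \<bar>code_val (gL (pair (enc_str s) K)) - lower_fs \<phi> s\<bar> \<le> (1/2) ^ K"
    and gU: "recursive1 gU" "\<And>s K. code_val (gU (pair (enc_str s) K)) \<le> 1 \<and>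
      \<bar>code_val (gU (pair (enc_str s) K)) - upper_fs \<phi> s\<bar> \<le> (1/2) ^ K"
    using computable_fs_clamp_codes[OF assms(1,2)] by metis
  show ?thesis
  proof (rule computable_real_upper_prob_cyl_sets[OF assms(1) member _ e(1) _ gL gU])
    show "fA (pair n (enc_str s)) \<noteq> 0 \<longleftrightarrow> s \<in> section_of A n" for n s
      by (simp add: fA(2) section_of_def)
    show "upper_prob \<phi> (cyl_set (section_of A n) - cyl_set {s \<in> section_of A n. length s < e N n}) \<le> (1/2) ^ N"
      for N n using e(2)[of N n "e N n"] by (simp add: section_lt_def)
  qed
qed

end
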